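(* Let $(G_n)_{n\in\mathbb{N}}$ be an $\mathrm{FO}$-convergent sequence of finite graphs with modeling limit $L$, and let $\xi(x)$ be a formula in the language of graphs with one free variable such that $\xi(L)$ is finite and nonempty, $\xi(L)$ contains no nonempty proper subset of the form $\chi(L)$ for a formula $\chi(x)$ in the language of graphs, and $|\xi(G_n)|=|\xi(L)|$ for every $n$. Then for any finitely many formulas $\phi_1,\dots,\phi_k$ in the language of rooted graphs there exist a sequence $(r_n)$ with $r_n\in\xi(G_n)$ and a vertex $r\in\xi(L)$ such that $\lim_{n\to\infty}\langle\phi_i,(G_n,r_n)\rangle=\langle\phi_i,(L,r)\rangle$ for each $i\in\{1,\dots,k\}$.
   Context: Graphs are first-order structures in the language with one binary (edge) relation. For a formula $\phi$ with $p$ free variables and a structure $G$, $\phi(G)=\{\mathbf{v}\in V(G)^p : G\models\phi(\mathbf{v})\}$. The Stone pairing of $\phi$ ($p\ge1$) with a finite graph $G$ is $\langle\phi,G\rangle=|\phi(G)|/|V(G)|^p$; for sentences it is $1$ if $G\models\phi$ and $0$ otherwise. A sequence of finite graphs is $\mathrm{FO}$-convergent if $(\langle\phi,G_n\rangle)$ converges for every formula $\phi$. A modeling is a graph $L$ whose vertex set is a standard Borel space with a probability measure $\nu$ such that every first-order definable set $\phi(L)\subseteq V(L)^p$ is measurable; $\langle\phi,L\rangle=\nu^{\otimes p}(\phi(L))$ (and $1$/$0$ for sentences). $L$ is a modeling limit of $(G_n)$ if $\lim_n\langle\phi,G_n\rangle=\langle\phi,L\rangle$ for all $\phi$. The language of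 rooted graphs adds a constant symbol $\mathrm{Root}$; $(G,r)$ is $G$ with $\mathrm{Root}$ interpreted as $r$, and Stone pairings with rooted structures are defined in the same way. *)

theory Defs
  imports "HOL-Probability.Probability"
begin

datatype trm = Var nat | Root

datatype fm = Eq trm trm | Adj trm trm | Neg fm | Conj fm fm | Ex nat fm

fun tvars :: "trm \<Rightarrow> nat set" where
  "tvars (Var i) = {i}"
| "tvars Root = {}"

fun fv :: "fm \<Rightarrow> nat set" where
  "fv (Eq s t) = tvars s \<union> tvars t"
| "fv (Adj s t) = tvars s \<union> tvars t"
| "fv (Neg \<phi>) = fv \<phi>"
| "fv (Conj \<phi> \<psi>) = fv \<phi> \<union> fv \<psi>"
| "fv (Ex x \<phi>) = fv \<phi> - {x}"

text \<open>Formulas of the (unrooted) language of graphs: no occurrence of Root.\<close>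
fun rootfree_t :: "trm \<Rightarrow> bool" where
  "rootfree_t (Var i) = True"
| "rootfree_t Root = False"

fun rootfree :: "fm \<Rightarrow> bool" where
  "rootfree (Eq s t) = (rootfree_t s \<and> rootfree_t t)"
| "rootfree (Adj s t) = (rootfree_t s \<and> rootfree_t t)"
| "rootfree (Neg \<phi>) = rootfree \<phi>"
| "rootfree (Conj \<phi> \<psi>) = (rootfree \<phi> \<and> rootfree \<psi>)"
| "rootfree (Ex x \<phi>) = rootfree \<phi>"

text \<open>Semantics in the structure with vertex set V, edge relation E and Root interpreted as r.
  (For formulas of the unrooted language the value of r is irrelevant.)\<close>
fun tval :: "'v \<Rightarrow> (nat \<Rightarrow> 'v) \<Rightarrow> trm \<Rightarrow> 'v" where
  "tval r \<sigma> (Var i) = \<sigma> i"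
| "tval r \<sigma> Root = r"

fun sat :: "'v set \<Rightarrow> ('v \<Rightarrow> 'v \<Rightarrow> bool) \<Rightarrow> 'v \<Rightarrow> (nat \<Rightarrow> 'v) \<Rightarrow> fm \<Rightarrow> bool" where
  "sat V E r \<sigma> (Eq s t) = (tval r \<sigma> s = tval r \<sigma> t)"
| "sat V E r \<sigma> (Adj s t) = E (tval r \<sigma> s) (tval r \<sigma> t)"
| "sat V E r \<sigma> (Neg \<phi>) = (\<not> sat V E r \<sigma> \<phi>)"
| "sat V E r \<sigma> (Conj \<phi> \<psi>) = (sat V E r \<sigma> \<phi> \<and> sat V E r \<sigma> \<psi>)"
| "sat V E r \<sigma> (Ex x \<phi>) = (\<exists>v\<in>V. sat V E r (\<sigma>(x := v)) \<phi>)"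

text \<open>Finite structure (V,E) rooted at r: the tuples of phi(G) are the assignments of the
  free variables of phi to vertices.\<close>
definition stone_fin :: "'v set \<Rightarrow> ('v \<Rightarrow> 'v \<Rightarrow> bool) \<Rightarrow> 'v \<Rightarrow> fm \<Rightarrow> real" where
  "stone_fin V E r \<phi> =
     (if fv \<phi> = {} then (if sat V E r (\<lambda>_. undefined) \<phi> then 1 else 0)
      else real (card {\<sigma> \<in> PiE (fv \<phi>) (\<lambda>_. V). sat V E r \<sigma> \<phi>})
           / real (card V) ^ card (fv \<phi>))"

definition defset_mod :: "'a measure \<Rightarrow> ('a \<Rightarrow> 'a \<Rightarrow> bool) \<Rightarrow> 'a \<Rightarrow> fm \<Rightarrow> (nat \<Rightarrow> 'a) set" where
  "defset_mod \<nu> E r \<phi> =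
     {\<sigma> \<in> space (PiM (fv \<phi>) (\<lambda>_. \<nu>)). sat (space \<nu>) E r \<sigma> \<phi>}"

definition stone_mod :: "'a measure \<Rightarrow> ('a \<Rightarrow> 'a \<Rightarrow> bool) \<Rightarrow> 'a \<Rightarrow> fm \<Rightarrow> real" where
  "stone_mod \<nu> E r \<phi> =
     (if fv \<phi> = {} then (if sat (space \<nu>) E r (\<lambda>_. undefined) \<phi> then 1 else 0)
      else measure (PiM (fv \<phi>) (\<lambda>_. \<nu>)) (defset_mod \<nu> E r \<phi>))"

text \<open>A modeling: vertex set a standard Borel space (the Borel sets of a Polish space)
  with a probability measure, such that every first-order definable set is measurable.\<close>
definition is_modeling :: "('a::polish_space) measure \<Rightarrow> ('a \<Rightarrow> 'a \<Rightarrow> bool) \<Rightarrow> bool" where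
  "is_modeling \<nu> E \<longleftrightarrow> prob_space \<nu> \<and> sets \<nu> = sets borel \<and>
     (\<forall>\<phi>. rootfree \<phi> \<longrightarrow>
        defset_mod \<nu> E undefined \<phi> \<in> sets (PiM (fv \<phi>) (\<lambda>_. \<nu>)))"

definition FO_convergent :: "(nat \<Rightarrow> 'v set) \<Rightarrow> (nat \<Rightarrow> 'v \<Rightarrow> 'v \<Rightarrow> bool) \<Rightarrow> bool" where
  "FO_convergent V E \<longleftrightarrow>
     (\<forall>\<phi>. rootfree \<phi> \<longrightarrow> convergent (\<lambda>n. stone_fin (V n) (E n) undefined \<phi>))"

definition modeling_limit ::
  "(nat \<Rightarrow> 'v set) \<Rightarrow> (nat \<Rightarrow> 'v \<Rightarrow> 'v \<Rightarrow> bool) \<Rightarrow> ('a::polish_space) measure \<Rightarrow> ('a \<Rightarrow> 'a \<Rightarrow> bool) \<Rightarrow> bool" where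
  "modeling_limit V E \<nu> EL \<longleftrightarrow> is_modeling \<nu> EL \<and>
     (\<forall>\<phi>. rootfree \<phi> \<longrightarrow>
        (\<lambda>n. stone_fin (V n) (E n) undefined \<phi>) \<longlonglongrightarrow> stone_mod \<nu> EL undefined \<phi>)"

definition defset1 :: "'v set \<Rightarrow> ('v \<Rightarrow> 'v \<Rightarrow> bool) \<Rightarrow> fm \<Rightarrow> nat \<Rightarrow> 'v set" where
  "defset1 V E \<xi> x = {v \<in> V. sat V E undefined ((\<lambda>_. undefined)(x := v)) \<xi>}"

end

theory Submission
  imports Defs
begin

text \<open>
  For a rooted formula \<gamma>, the sum of \<langle>\<gamma>,(G,r)\<rangle> over the roots r \<in> \<xi>(G) equals the sum of
  \<langle>\<Theta>_t,G\<rangle> over t = 1..|\<xi>(G)|, where the unrooted formula \<Theta>_t says that at least t vertices of \<xi>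
  satisfy \<gamma> as root. A product of rooted pairings is the pairing of a conjunction of
  variable-disjoint copies, so every moment \<Sum>_r \<Prod>_i \<langle>\<phi>_i,(G_n,r)\<rangle> converges to the
  corresponding moment of L; a finite graph is handled as the modeling with the uniform measure,
  so both sides are computed by the same argument.

  Fix r_0 \<in> \<xi>(L) and let w(r) be the vector of pairings \<langle>\<phi>_i,(L,r)\<rangle>. Take a nonnegative
  polynomial P vanishing at every w(r) \<noteq> w(r_0) with P(w(r_0)) > 0, and let d be the squared
  distance to w(r_0). The moment of d\<cdot>P tends to 0 while that of P stays positive; since all
  \<xi>(G_n) have the same size, a root r_n maximising P satisfies
  d(r_n) \<le> |\<xi>(L)| \<cdot> (moment of d\<cdot>P) / (moment of P) \<rightarrow> 0, i.e. the pairings at (G_n,r_n)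
  converge to those at (L,r_0).
\<close>

fun vars :: "fm \<Rightarrow> nat set" where
  "vars (Eq s t) = tvars s \<union> tvars t"
| "vars (Adj s t) = tvars s \<union> tvars t"
| "vars (Neg \<phi>) = vars \<phi>"
| "vars (Conj \<phi> \<psi>) = vars \<phi> \<union> vars \<psi>"
| "vars (Ex x \<phi>) = insert x (vars \<phi>)"

lemma finite_tvars [simp]: "finite (tvars t)"
  by (cases t) auto

lemma finite_vars [simp]: "finite (vars \<phi>)"
  by (induction \<phi>) auto

lemma fv_subset_vars: "fv \<phi> \<subseteq> vars \<phi>"
  by (induction \<phi>) auto

lemma finite_fv [simp]: "finite (fv \<phi>)"
  using fv_subset_vars finite_subset finite_vars by blast

definition var_bound :: "nat set \<Rightarrow> nat" where
  "var_bound S = Suc (Max (insert 0 S))"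

lemma less_var_bound: "finite S \<Longrightarrow> i \<in> S \<Longrightarrow> i < var_bound S"
  unfolding var_bound_def by (simp add: le_imp_less_Suc)

lemma tval_cong: "\<forall>i\<in>tvars t. \<sigma> i = \<sigma>' i \<Longrightarrow> tval r \<sigma> t = tval r \<sigma>' t"
  by (cases t) auto

lemma sat_cong: "\<forall>i\<in>fv \<phi>. \<sigma> i = \<sigma>' i \<Longrightarrow> sat V E r \<sigma> \<phi> = sat V E r \<sigma>' \<phi>"
proof (induction \<phi> arbitrary: \<sigma> \<sigma>')
  case (Eq s t)
  then show ?case using tval_cong[of s \<sigma> \<sigma>' r] tval_cong[of t \<sigma> \<sigma>' r] by auto
next
  case (Adj s t)
  then show ?case using tval_cong[of s \<sigma> \<sigma>' r] tval_cong[of t \<sigma> \<sigma>' r] by auto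
next
  case (Ex y \<phi>)
  then have "sat V E r (\<sigma>(y := v)) \<phi> = sat V E r (\<sigma>'(y := v)) \<phi>" for v
    by (intro Ex.IH) auto
  then show ?case by simp
next
  case (Conj \<phi> \<psi>)
  have "sat V E r \<sigma> \<phi> = sat V E r \<sigma>' \<phi>" "sat V E r \<sigma> \<psi> = sat V E r \<sigma>' \<psi>"
    using Conj.prems by (auto intro!: Conj.IH)
  then show ?case by simp
qed simp

lemma sat_rootfree: "rootfree \<phi> \<Longrightarrow> sat V E r \<sigma> \<phi> = sat V E r' \<sigma> \<phi>"
proof (induction \<phi> arbitrary: \<sigma>)
  case (Eq s t) then show ?case by (cases s; cases t) auto
next
  case (Adj s t) then show ?case by (cases s; cases t) auto
qed auto

fun tsubst_Root :: "nat \<Rightarrow> trm \<Rightarrow> trm" where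
  "tsubst_Root z (Var i) = Var i"
| "tsubst_Root z Root = Var z"

fun subst_Root :: "nat \<Rightarrow> fm \<Rightarrow> fm" where
  "subst_Root z (Eq s t) = Eq (tsubst_Root z s) (tsubst_Root z t)"
| "subst_Root z (Adj s t) = Adj (tsubst_Root z s) (tsubst_Root z t)"
| "subst_Root z (Neg \<phi>) = Neg (subst_Root z \<phi>)"
| "subst_Root z (Conj \<phi> \<psi>) = Conj (subst_Root z \<phi>) (subst_Root z \<psi>)"
| "subst_Root z (Ex x \<phi>) = Ex x (subst_Root z \<phi>)"

lemma rootfree_subst_Root: "rootfree (subst_Root z \<phi>)"
proof (induction \<phi>)
  case (Eq s t) then show ?case by (cases s; cases t) auto
next
  case (Adj s t) then show ?case by (cases s; cases t) auto
qed auto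

lemma sat_subst_Root: "z \<notin> vars \<phi> \<Longrightarrow> sat V E r \<sigma> (subst_Root z \<phi>) = sat V E (\<sigma> z) \<sigma> \<phi>"
proof (induction \<phi> arbitrary: \<sigma>)
  case (Eq s t) then show ?case by (cases s; cases t) auto
next
  case (Adj s t) then show ?case by (cases s; cases t) auto
qed auto

lemma fv_subst_Root: "fv \<phi> \<subseteq> fv (subst_Root z \<phi>)" "fv (subst_Root z \<phi>) \<subseteq> insert z (fv \<phi>)"
proof -
  have "tvars t \<subseteq> tvars (tsubst_Root z t)" "tvars (tsubst_Root z t) \<subseteq> insert z (tvars t)" for t
    by (cases t; auto)+
  then show "fv \<phi> \<subseteq> fv (subst_Root z \<phi>)" "fv (subst_Root z \<phi>) \<subseteq> insert z (fv \<phi>)"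
    by (induction \<phi>) auto
qed

fun trename :: "(nat \<Rightarrow> nat) \<Rightarrow> trm \<Rightarrow> trm" where
  "trename \<rho> (Var i) = Var (\<rho> i)"
| "trename \<rho> Root = Root"

fun rename :: "(nat \<Rightarrow> nat) \<Rightarrow> fm \<Rightarrow> fm" where
  "rename \<rho> (Eq s t) = Eq (trename \<rho> s) (trename \<rho> t)"
| "rename \<rho> (Adj s t) = Adj (trename \<rho> s) (trename \<rho> t)"
| "rename \<rho> (Neg \<phi>) = Neg (rename \<rho> \<phi>)"
| "rename \<rho> (Conj \<phi> \<psi>) = Conj (rename \<rho> \<phi>) (rename \<rho> \<psi>)"
| "rename \<rho> (Ex x \<phi>) = Ex (\<rho> x) (rename \<rho> \<phi>)"

lemma sat_rename: "inj \<rho> \<Longrightarrow> sat V E r \<sigma> (rename \<rho> \<phi>) = sat V E r (\<sigma> \<circ> \<rho>) \<phi>"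
proof (induction \<phi> arbitrary: \<sigma>)
  case (Eq s t) then show ?case by (cases s; cases t) auto
next
  case (Adj s t) then show ?case by (cases s; cases t) auto
next
  case (Ex y \<phi>)
  have "\<sigma>(\<rho> y := v) \<circ> \<rho> = (\<sigma> \<circ> \<rho>)(y := v)" for v
    using Ex.prems by (auto simp: fun_eq_iff inj_def)
  then show ?case
    by (simp only: sat.simps rename.simps Ex.IH[OF Ex.prems])
qed auto

lemma fv_rename: "inj \<rho> \<Longrightarrow> fv (rename \<rho> \<phi>) = \<rho> ` fv \<phi>"
proof (induction \<phi>)
  case (Eq s t) then show ?case by (cases s; cases t) auto
next
  case (Adj s t) then show ?case by (cases s; cases t) auto
next
  case (Ex y \<phi>) then show ?case by (auto simp: inj_def)
qed (auto simp: image_Un)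

section \<open>Formulas counting roots\<close>

definition true_fm :: fm where
  "true_fm = Neg (Ex 0 (Neg (Eq (Var 0) (Var 0))))"

lemma sat_true_fm [simp]: "sat V E r \<sigma> true_fm"
  and fv_true_fm [simp]: "fv true_fm = {}"
  and rootfree_true_fm [simp]: "rootfree true_fm"
  by (simp_all add: true_fm_def)

fun conjs :: "fm list \<Rightarrow> fm" where
  "conjs [] = true_fm"
| "conjs (\<phi> # \<phi>s) = Conj \<phi> (conjs \<phi>s)"

lemma sat_conjs: "sat V E r \<sigma> (conjs \<phi>s) \<longleftrightarrow> (\<forall>\<phi>\<in>set \<phi>s. sat V E r \<sigma> \<phi>)"
  by (induction \<phi>s) auto

lemma fv_conjs: "fv (conjs \<phi>s) = (\<Union>\<phi>\<in>set \<phi>s. fv \<phi>)"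
  by (induction \<phi>s) auto

lemma rootfree_conjs: "rootfree (conjs \<phi>s) \<longleftrightarrow> (\<forall>\<phi>\<in>set \<phi>s. rootfree \<phi>)"
  by (induction \<phi>s) auto

lemma sat_foldr_Ex:
  "sat V E r \<sigma> (foldr Ex zs \<phi>) \<longleftrightarrow>
     (\<exists>\<tau>. (\<forall>i. i \<notin> set zs \<longrightarrow> \<tau> i = \<sigma> i) \<and> \<tau> ` set zs \<subseteq> V \<and> sat V E r \<tau> \<phi>)"
proof (induction zs arbitrary: \<sigma>)
  case Nil
  show ?case by (simp add: fun_eq_iff[symmetric])
next
  case (Cons z zs)
  have "sat V E r \<sigma> (foldr Ex (z # zs) \<phi>) \<longleftrightarrow>
      (\<exists>v\<in>V. \<exists>\<tau>. (\<forall>i. i \<notin> set zs \<longrightarrow> \<tau> i = (\<sigma>(z := v)) i) \<and> \<tau> ` set zs \<subseteq> V \<and> sat V E r \<tau> \<phi>)"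
    by (simp add: Cons.IH)
  also have "\<dots> \<longleftrightarrow> (\<exists>\<tau>. (\<forall>i. i \<notin> set (z # zs) \<longrightarrow> \<tau> i = \<sigma> i) \<and> \<tau> ` set (z # zs) \<subseteq> V \<and> sat V E r \<tau> \<phi>)"
  proof
    assume "\<exists>v\<in>V. \<exists>\<tau>. (\<forall>i. i \<notin> set zs \<longrightarrow> \<tau> i = (\<sigma>(z := v)) i) \<and> \<tau> ` set zs \<subseteq> V \<and> sat V E r \<tau> \<phi>"
    then obtain v \<tau> where v: "v \<in> V" and \<tau>: "\<forall>i. i \<notin> set zs \<longrightarrow> \<tau> i = (\<sigma>(z := v)) i"
      "\<tau> ` set zs \<subseteq> V" "sat V E r \<tau> \<phi>"
      by blast
    have "\<tau> z \<in> V"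
      using v \<tau> by (cases "z \<in> set zs") auto
    with \<tau> show "\<exists>\<tau>. (\<forall>i. i \<notin> set (z # zs) \<longrightarrow> \<tau> i = \<sigma> i) \<and> \<tau> ` set (z # zs) \<subseteq> V \<and> sat V E r \<tau> \<phi>"
      by (intro exI[of _ \<tau>]) auto
  next
    assume "\<exists>\<tau>. (\<forall>i. i \<notin> set (z # zs) \<longrightarrow> \<tau> i = \<sigma> i) \<and> \<tau> ` set (z # zs) \<subseteq> V \<and> sat V E r \<tau> \<phi>"
    then obtain \<tau> where "\<forall>i. i \<notin> set (z # zs) \<longrightarrow> \<tau> i = \<sigma> i" "\<tau> ` set (z # zs) \<subseteq> V" "sat V E r \<tau> \<phi>"
      by blast
    then show "\<exists>v\<in>V. \<exists>\<tau>. (\<forall>i. i \<notin> set zs \<longrightarrow> \<tau> i = (\<sigma>(z := v)) i) \<and> \<tau> ` set zs \<subseteq> V \<and> sat V E r \<tau> \<phi>"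
      by (intro bexI[of _ "\<tau> z"] exI[of _ \<tau>]) auto
  qed
  finally show ?case .
qed

lemma fv_foldr_Ex: "fv (foldr Ex zs \<phi>) = fv \<phi> - set zs"
  by (induction zs) auto

lemma rootfree_foldr_Ex: "rootfree (foldr Ex zs \<phi>) = rootfree \<phi>"
  by (induction zs) auto

text \<open>The formula \<xi>(z), written without substituting z into \<xi>.\<close>

definition holds_at :: "fm \<Rightarrow> nat \<Rightarrow> nat \<Rightarrow> fm" where
  "holds_at \<xi> x z = Ex x (Conj (Eq (Var x) (Var z)) \<xi>)"

lemma sat_holds_at:
  assumes "rootfree \<xi>" "fv \<xi> = {x}" "z \<noteq> x"
  shows "sat V E r \<sigma> (holds_at \<xi> x z) \<longleftrightarrow> \<sigma> z \<in> defset1 V E \<xi> x"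
proof -
  have "sat V E r (\<sigma>(x := \<sigma> z)) \<xi> = sat V E r ((\<lambda>_. undefined)(x := \<sigma> z)) \<xi>"
    using assms(2) by (intro sat_cong) simp
  also have "\<dots> = sat V E undefined ((\<lambda>_. undefined)(x := \<sigma> z)) \<xi>"
    using assms(1) by (rule sat_rootfree)
  finally show ?thesis
    using assms(3) by (auto simp: holds_at_def defset1_def)
qed

lemma fv_holds_at: "fv \<xi> = {x} \<Longrightarrow> z \<noteq> x \<Longrightarrow> fv (holds_at \<xi> x z) = {z}"
  by (auto simp: holds_at_def)

lemma ex_inj_on_extension_iff_card_le:
  assumes "finite Z" "finite S"
  shows "(\<exists>\<tau>. (\<forall>i. i \<notin> Z \<longrightarrow> \<tau> i = \<sigma> i) \<and> \<tau> ` Z \<subseteq> S \<and> inj_on \<tau> Z) \<longleftrightarrow> card Z \<le> card S"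
proof
  assume "\<exists>\<tau>. (\<forall>i. i \<notin> Z \<longrightarrow> \<tau> i = \<sigma> i) \<and> \<tau> ` Z \<subseteq> S \<and> inj_on \<tau> Z"
  then show "card Z \<le> card S"
    using assms(2) card_inj_on_le by blast
next
  assume "card Z \<le> card S"
  then obtain f where f: "f ` Z \<subseteq> S" "inj_on f Z"
    using card_le_inj assms by blast
  let ?\<tau> = "\<lambda>i. if i \<in> Z then f i else \<sigma> i"
  have "inj_on ?\<tau> Z"
    using f(2) by (simp add: inj_on_def)
  with f(1) show "\<exists>\<tau>. (\<forall>i. i \<notin> Z \<longrightarrow> \<tau> i = \<sigma> i) \<and> \<tau> ` Z \<subseteq> S \<and> inj_on \<tau> Z"
    by (intro exI[of _ ?\<tau>]) auto
qed

definition distinct_vars :: "nat list \<Rightarrow> fm" where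
  "distinct_vars zs = conjs [Neg (Eq (Var i) (Var j)). i \<leftarrow> zs, j \<leftarrow> zs, i \<noteq> j]"

lemma sat_distinct_vars: "sat V E r \<sigma> (distinct_vars zs) \<longleftrightarrow> inj_on \<sigma> (set zs)"
  by (auto simp: distinct_vars_def sat_conjs inj_on_def)

lemma fv_distinct_vars: "fv (distinct_vars zs) \<subseteq> set zs"
  by (auto simp: distinct_vars_def fv_conjs)

lemma rootfree_distinct_vars: "rootfree (distinct_vars zs)"
  by (auto simp: distinct_vars_def rootfree_conjs)

definition roots_with :: "fm \<Rightarrow> nat \<Rightarrow> fm \<Rightarrow> nat list \<Rightarrow> fm" where
  "roots_with \<xi> x \<gamma> zs = conjs (map (\<lambda>z. Conj (holds_at \<xi> x z) (subst_Root z \<gamma>)) zs)"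

lemma sat_roots_with:
  assumes "rootfree \<xi>" "fv \<xi> = {x}" "x \<notin> set zs" "\<forall>z\<in>set zs. z \<notin> vars \<gamma>"
  shows "sat V E r \<sigma> (roots_with \<xi> x \<gamma> zs) \<longleftrightarrow>
    (\<forall>z\<in>set zs. \<sigma> z \<in> defset1 V E \<xi> x \<and> sat V E (\<sigma> z) \<sigma> \<gamma>)"
proof -
  have "sat V E r \<sigma> (Conj (holds_at \<xi> x z) (subst_Root z \<gamma>)) \<longleftrightarrow>
      \<sigma> z \<in> defset1 V E \<xi> x \<and> sat V E (\<sigma> z) \<sigma> \<gamma>" if "z \<in> set zs" for z
  proof -
    have "z \<noteq> x" "z \<notin> vars \<gamma>"
      using that assms(3,4) by auto
    then show ?thesis
      by (simp add: sat_holds_at[OF assms(1,2)] sat_subst_Root)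
  qed
  then show ?thesis
    by (auto simp: roots_with_def sat_conjs)
qed

lemma fv_roots_with:
  assumes "fv \<xi> = {x}" "x \<notin> set zs"
  shows "fv (roots_with \<xi> x \<gamma> zs) \<subseteq> set zs \<union> fv \<gamma>"
    and "zs \<noteq> [] \<Longrightarrow> fv \<gamma> \<subseteq> fv (roots_with \<xi> x \<gamma> zs)"
proof -
  have "fv (holds_at \<xi> x z) = {z}" if "z \<in> set zs" for z
    using that assms(2) by (intro fv_holds_at[OF assms(1)]) auto
  then have "fv (roots_with \<xi> x \<gamma> zs) = (\<Union>z\<in>set zs. insert z (fv (subst_Root z \<gamma>)))"
    by (simp add: roots_with_def fv_conjs)
  then show "fv (roots_with \<xi> x \<gamma> zs) \<subseteq> set zs \<union> fv \<gamma>"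
    and "zs \<noteq> [] \<Longrightarrow> fv \<gamma> \<subseteq> fv (roots_with \<xi> x \<gamma> zs)"
    using fv_subst_Root by (fastforce simp: neq_Nil_conv)+
qed

lemma rootfree_roots_with: "rootfree \<xi> \<Longrightarrow> rootfree (roots_with \<xi> x \<gamma> zs)"
  by (auto simp: roots_with_def rootfree_conjs holds_at_def rootfree_subst_Root)

definition at_least_roots :: "nat \<Rightarrow> fm \<Rightarrow> nat \<Rightarrow> fm \<Rightarrow> fm" where
  "at_least_roots t \<xi> x \<gamma> =
     (let B = var_bound (insert x (vars \<gamma>)); zs = [B..<B + t]
      in foldr Ex zs (Conj (roots_with \<xi> x \<gamma> zs) (distinct_vars zs)))"

lemma at_least_roots_fresh:
  assumes "z \<in> {var_bound (insert x (vars \<gamma>))..<var_bound (insert x (vars \<gamma>)) + t}"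
  shows "z \<noteq> x" "z \<notin> vars \<gamma>" "z \<notin> fv \<gamma>"
  using assms less_var_bound[of "insert x (vars \<gamma>)" x] less_var_bound[of "insert x (vars \<gamma>)" z]
    fv_subset_vars[of \<gamma>] by auto

lemma sat_at_least_roots:
  assumes \<xi>: "rootfree \<xi>" "fv \<xi> = {x}" and fin: "finite (defset1 V E \<xi> x)"
  shows "sat V E r \<sigma> (at_least_roots t \<xi> x \<gamma>) \<longleftrightarrow> t \<le> card {s \<in> defset1 V E \<xi> x. sat V E s \<sigma> \<gamma>}"
proof -
  define B where "B = var_bound (insert x (vars \<gamma>))"
  define Z where "Z = {B..<B + t}"
  let ?S = "{s \<in> defset1 V E \<xi> x. sat V E s \<sigma> \<gamma>}"
  note fresh = at_least_roots_fresh[of _ x \<gamma> t, folded B_def, folded Z_def]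
  have \<gamma>: "sat V E s \<tau> \<gamma> = sat V E s \<sigma> \<gamma>" if "\<forall>i. i \<notin> Z \<longrightarrow> \<tau> i = \<sigma> i" for \<tau> s
    using that fresh(3) by (intro sat_cong) blast
  have "sat V E r \<sigma> (at_least_roots t \<xi> x \<gamma>) \<longleftrightarrow>
      (\<exists>\<tau>. (\<forall>i. i \<notin> Z \<longrightarrow> \<tau> i = \<sigma> i) \<and> \<tau> ` Z \<subseteq> V \<and>
         (\<forall>z\<in>Z. \<tau> z \<in> defset1 V E \<xi> x \<and> sat V E (\<tau> z) \<tau> \<gamma>) \<and> inj_on \<tau> Z)"
  proof -
    have "x \<notin> set [B..<B + t]" "\<forall>z\<in>set [B..<B + t]. z \<notin> vars \<gamma>"
      using fresh by (auto simp: Z_def)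
    then show ?thesis
      unfolding at_least_roots_def Let_def sat_foldr_Ex B_def[symmetric] sat.simps(4) sat_distinct_vars
      by (simp add: sat_roots_with[OF \<xi>] Z_def)
  qed
  also have "\<dots> \<longleftrightarrow> (\<exists>\<tau>. (\<forall>i. i \<notin> Z \<longrightarrow> \<tau> i = \<sigma> i) \<and> \<tau> ` Z \<subseteq> ?S \<and> inj_on \<tau> Z)"
  proof (rule ex_cong1)
    fix \<tau>
    have "\<tau> ` Z \<subseteq> V \<and> (\<forall>z\<in>Z. \<tau> z \<in> defset1 V E \<xi> x \<and> sat V E (\<tau> z) \<tau> \<gamma>) \<longleftrightarrow> \<tau> ` Z \<subseteq> ?S"
      if "\<forall>i. i \<notin> Z \<longrightarrow> \<tau> i = \<sigma> i"
      using \<gamma>[OF that] by (auto simp: defset1_def)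
    then show "(\<forall>i. i \<notin> Z \<longrightarrow> \<tau> i = \<sigma> i) \<and> \<tau> ` Z \<subseteq> V \<and>
        (\<forall>z\<in>Z. \<tau> z \<in> defset1 V E \<xi> x \<and> sat V E (\<tau> z) \<tau> \<gamma>) \<and> inj_on \<tau> Z \<longleftrightarrow>
      (\<forall>i. i \<notin> Z \<longrightarrow> \<tau> i = \<sigma> i) \<and> \<tau> ` Z \<subseteq> ?S \<and> inj_on \<tau> Z"
      by blast
  qed
  also have "\<dots> \<longleftrightarrow> t \<le> card ?S"
    using fin by (subst ex_inj_on_extension_iff_card_le) (auto simp: Z_def)
  finally show ?thesis .
qed

lemma fv_at_least_roots:
  assumes "fv \<xi> = {x}" "0 < t"
  shows "fv (at_least_roots t \<xi> x \<gamma>) = fv \<gamma>"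
proof -
  define B where "B = var_bound (insert x (vars \<gamma>))"
  define zs where "zs = [B..<B + t]"
  note fresh = at_least_roots_fresh[of _ x \<gamma> t, folded B_def]
  have "x \<notin> set zs" "zs \<noteq> []"
    using fresh assms(2) by (auto simp: zs_def)
  then have "fv \<gamma> \<subseteq> fv (Conj (roots_with \<xi> x \<gamma> zs) (distinct_vars zs))"
    and "fv (Conj (roots_with \<xi> x \<gamma> zs) (distinct_vars zs)) \<subseteq> set zs \<union> fv \<gamma>"
    using fv_roots_with[OF assms(1)] fv_distinct_vars by fastforce+
  moreover have "set zs \<inter> fv \<gamma> = {}"
    using fresh by (auto simp: zs_def)
  ultimately show ?thesis
    unfolding at_least_roots_def Let_def B_def[symmetric] zs_def[symmetric] fv_foldr_Ex by blast
qed

lemma rootfree_at_least_roots: "rootfree \<xi> \<Longrightarrow> rootfree (at_least_roots t \<xi> x \<gamma>)"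
  by (simp add: at_least_roots_def Let_def rootfree_foldr_Ex rootfree_roots_with rootfree_distinct_vars)

definition conj_apart :: "fm \<Rightarrow> fm \<Rightarrow> fm" where
  "conj_apart \<phi> \<psi> = Conj \<phi> (rename (\<lambda>i. i + var_bound (fv \<phi>)) \<psi>)"

definition conjs_apart :: "fm list \<Rightarrow> fm" where
  "conjs_apart \<phi>s = foldr conj_apart \<phi>s true_fm"

lemma stone_mod_eq_measure:
  "stone_mod \<mu> E r \<phi> = measure (PiM (fv \<phi>) (\<lambda>_. \<mu>)) (defset_mod \<mu> E r \<phi>)"
proof (cases "fv \<phi> = {}")
  case True
  then have "defset_mod \<mu> E r \<phi> = (if sat (space \<mu>) E r (\<lambda>_. undefined) \<phi> then {\<lambda>_. undefined} else {})"
    by (auto simp: defset_mod_def PiM_empty)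
  then show ?thesis
    using True by (simp add: stone_mod_def PiM_empty)
qed (simp add: stone_mod_def)

lemma measure_PiM_uniform_count_measure:
  assumes V: "finite V" "V \<noteq> {}" and I: "finite I" and X: "X \<subseteq> PiE I (\<lambda>_. V)"
  shows "X \<in> sets (PiM I (\<lambda>_. uniform_count_measure V))"
    and "measure (PiM I (\<lambda>_. uniform_count_measure V)) X = card X / card V ^ card I"
proof -
  let ?U = "uniform_count_measure V"
  have "product_prob_space (\<lambda>_. ?U)"
    using V by (intro product_prob_spaceI prob_space_uniform_count_measure)
  then interpret finite_product_prob_space "\<lambda>_. ?U" I
    using I by (simp add: finite_product_prob_space_def finite_product_sigma_finite_def
        finite_product_sigma_finite_axioms_def product_prob_space_def)
  have finX: "finite X"
    using X V I by (meson finite_PiE finite_subset)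
  have singleton: "{\<sigma>} = PiE I (\<lambda>i. {\<sigma> i})" if "\<sigma> \<in> X" for \<sigma>
    using that X by (intro PiE_singleton[symmetric]) (auto simp: PiE_def)
  have sets: "{\<sigma>} \<in> sets (PiM I (\<lambda>_. ?U))" if "\<sigma> \<in> X" for \<sigma>
    using that X singleton[OF that]
    by (auto intro!: sets_PiM_I_finite I simp: sets_uniform_count_measure PiE_iff)
  then show "X \<in> sets (PiM I (\<lambda>_. ?U))"
    using sets.finite_UN[of X "\<lambda>\<sigma>. {\<sigma>}", OF finX sets] by simp
  have "prob {\<sigma>} = 1 / card V ^ card I" if "\<sigma> \<in> X" for \<sigma>
    using that X V singleton[OF that]
    by (auto simp: prob_times sets_uniform_count_measure measure_uniform_count_measure PiE_iff
        power_one_over)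
  then show "measure (PiM I (\<lambda>_. ?U)) X = card X / card V ^ card I"
    using measure_eq_sum_singleton[OF finX sets] by (simp add: emeasure_eq_measure)
qed

lemma stone_fin_eq_stone_mod:
  assumes "finite V" "V \<noteq> {}"
  shows "stone_fin V E r \<phi> = stone_mod (uniform_count_measure V) E r \<phi>"
proof (cases "fv \<phi> = {}")
  case False
  have "defset_mod (uniform_count_measure V) E r \<phi> = {\<sigma> \<in> PiE (fv \<phi>) (\<lambda>_. V). sat V E r \<sigma> \<phi>}"
    by (simp add: defset_mod_def space_PiM space_uniform_count_measure)
  moreover have "measure (PiM (fv \<phi>) (\<lambda>_. uniform_count_measure V)) {\<sigma> \<in> PiE (fv \<phi>) (\<lambda>_. V). sat V E r \<sigma> \<phi>}
      = card {\<sigma> \<in> PiE (fv \<phi>) (\<lambda>_. V). sat V E r \<sigma> \<phi>} / card V ^ card (fv \<phi>)"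
    by (rule measure_PiM_uniform_count_measure(2)[OF assms finite_fv]) auto
  ultimately show ?thesis
    using False by (simp only: stone_fin_def stone_mod_def if_False of_nat_power)
qed (simp add: stone_fin_def stone_mod_def space_uniform_count_measure)

text \<open>Finite graphs with the uniform measure and modelings are both measured graphs, so the
  product and counting identities for Stone pairings are proved once for both.\<close>

locale measured_graph = prob_space \<mu> for \<mu> :: "'a measure" +
  fixes E :: "'a \<Rightarrow> 'a \<Rightarrow> bool"
  assumes defset_measurable: "defset_mod \<mu> E r \<phi> \<in> sets (PiM (fv \<phi>) (\<lambda>_. \<mu>))"

lemma measured_graph_uniform_count_measure:
  assumes "finite V" "V \<noteq> {}"
  shows "measured_graph (uniform_count_measure V) E"
  unfolding measured_graph_def measured_graph_axioms_def
proof (intro conjI allI)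
  show "prob_space (uniform_count_measure V)"
    using assms by (rule prob_space_uniform_count_measure)
  fix r \<phi>
  show "defset_mod (uniform_count_measure V) E r \<phi> \<in> sets (PiM (fv \<phi>) (\<lambda>_. uniform_count_measure V))"
    using assms by (intro measure_PiM_uniform_count_measure(1))
      (auto simp: defset_mod_def space_PiM space_uniform_count_measure)
qed

lemma measured_graph_modeling:
  assumes "is_modeling \<nu> EL"
  shows "measured_graph \<nu> EL"
  unfolding measured_graph_def measured_graph_axioms_def
proof (intro conjI allI)
  show "prob_space \<nu>"
    using assms unfolding is_modeling_def by blast
  have space: "space \<nu> = UNIV"
    using assms sets_eq_imp_space_eq unfolding is_modeling_def by fastforce
  fix r \<phi>
  \<comment> \<open>The rooted set is the preimage of an unrooted definable set under \<sigma> \<mapsto> \<sigma>(z := r), z fresh.\<close>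
  obtain z where z: "z \<notin> vars \<phi>"
    using ex_new_if_finite[OF infinite_UNIV_nat finite_vars] by blast
  let ?I = "fv \<phi>" and ?J = "fv (subst_Root z \<phi>)"
  define g where "g \<sigma> = (\<lambda>i\<in>?J. (\<sigma>(z := r)) i)" for \<sigma> :: "nat \<Rightarrow> 'a"
  have g: "g \<in> PiM ?I (\<lambda>_. \<nu>) \<rightarrow>\<^sub>M PiM ?J (\<lambda>_. \<nu>)"
    unfolding g_def
  proof (rule measurable_restrict)
    fix i assume "i \<in> ?J"
    then show "(\<lambda>\<sigma>. (\<sigma>(z := r)) i) \<in> PiM ?I (\<lambda>_. \<nu>) \<rightarrow>\<^sub>M \<nu>"
      using fv_subst_Root(2)[of z \<phi>] space by (cases "i = z") auto
  qed
  have "sat (space \<nu>) EL undefined (g \<sigma>) (subst_Root z \<phi>) = sat (space \<nu>) EL r \<sigma> \<phi>" for \<sigma>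
  proof -
    have "sat (space \<nu>) EL undefined (g \<sigma>) (subst_Root z \<phi>) = sat (space \<nu>) EL undefined (\<sigma>(z := r)) (subst_Root z \<phi>)"
      unfolding g_def by (rule sat_cong) simp
    also have "\<dots> = sat (space \<nu>) EL r (\<sigma>(z := r)) \<phi>"
      using sat_subst_Root[OF z, of "space \<nu>" EL undefined "\<sigma>(z := r)"] by simp
    also have "\<dots> = sat (space \<nu>) EL r \<sigma> \<phi>"
      using z fv_subset_vars by (intro sat_cong) auto
    finally show ?thesis .
  qed
  then have "g -` defset_mod \<nu> EL undefined (subst_Root z \<phi>) \<inter> space (PiM ?I (\<lambda>_. \<nu>)) = defset_mod \<nu> EL r \<phi>"
    using measurable_space[OF g] by (auto simp: defset_mod_def)
  moreover have "defset_mod \<nu> EL undefined (subst_Root z \<phi>) \<in> sets (PiM ?J (\<lambda>_. \<nu>))"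
    using assms rootfree_subst_Root unfolding is_modeling_def by blast
  ultimately show "defset_mod \<nu> EL r \<phi> \<in> sets (PiM ?I (\<lambda>_. \<nu>))"
    using measurable_sets[OF g] by metis
qed

lemma (in finite_measure) sum_measure_eq_sum_measure_levels:
  assumes T: "finite T" "card T \<le> N" and A: "\<And>r. r \<in> T \<Longrightarrow> A r \<in> sets M"
  shows "(\<Sum>r\<in>T. measure M (A r)) = (\<Sum>t\<in>{1..N}. measure M {\<omega> \<in> space M. t \<le> card {r \<in> T. \<omega> \<in> A r}})"
proof -
  define c where "c \<omega> = (\<Sum>r\<in>T. indicator (A r) \<omega> :: real)" for \<omega>
  define L where "L t = {\<omega> \<in> space M. real t \<le> c \<omega>}" for t :: nat
  have c: "c \<omega> = card {r \<in> T. \<omega> \<in> A r}" for \<omega>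
    using T(1) by (simp add: c_def indicator_def sum.If_cases Int_def conj_commute)
  have "c \<in> borel_measurable M"
    unfolding c_def using A by (intro borel_measurable_sum borel_measurable_indicator)
  then have L: "L t \<in> sets M" for t
    unfolding L_def by (rule borel_measurable_le[OF borel_measurable_const])
  have levels: "c \<omega> = (\<Sum>t\<in>{1..N}. indicator (L t) \<omega>)" if "\<omega> \<in> space M" for \<omega>
  proof -
    let ?k = "card {r \<in> T. \<omega> \<in> A r}"
    have "?k \<le> N"
      using T card_mono[OF T(1), of "{r \<in> T. \<omega> \<in> A r}"] by auto
    then have "{t \<in> {1..N}. t \<le> ?k} = {1..?k}"
      by auto
    moreover have "indicator (L t) \<omega> = (if t \<le> ?k then 1 else 0 :: real)" for t
      using that by (simp add: L_def c indicator_def)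
    ultimately show ?thesis
      by (simp add: c sum.If_cases Int_def conj_commute)
  qed
  have "(\<Sum>r\<in>T. measure M (A r)) = integral\<^sup>L M c"
    unfolding c_def using A
    by (subst Bochner_Integration.integral_sum) (auto simp: less_top[symmetric] Int_absorb2 sets.sets_into_space)
  also have "\<dots> = integral\<^sup>L M (\<lambda>\<omega>. \<Sum>t\<in>{1..N}. indicator (L t) \<omega>)"
    using levels by (rule Bochner_Integration.integral_cong[OF refl])
  also have "\<dots> = (\<Sum>t\<in>{1..N}. measure M (L t))"
    using L
    by (subst Bochner_Integration.integral_sum) (auto simp: less_top[symmetric] Int_absorb2 sets.sets_into_space)
  finally show ?thesis
    by (simp add: L_def c)
qed

context measured_graph
begin

lemma prob_space_PiM_const: "prob_space (PiM I (\<lambda>_. \<mu>))"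
  by (intro prob_space_PiM prob_space_axioms)

lemma stone_mod_rename:
  assumes \<rho>: "inj \<rho>"
  shows "stone_mod \<mu> E r (rename \<rho> \<phi>) = stone_mod \<mu> E r \<phi>"
proof -
  let ?I = "fv \<phi>" and ?J = "\<rho> ` fv \<phi>"
  let ?h = "\<lambda>\<omega>. \<lambda>i\<in>?I. \<omega> (\<rho> i)"
  have h: "?h \<in> PiM ?J (\<lambda>_. \<mu>) \<rightarrow>\<^sub>M PiM ?I (\<lambda>_. \<mu>)"
    by (rule measurable_restrict) auto
  have "distr (PiM ?J (\<lambda>_. \<mu>)) (PiM ?I (\<lambda>_. \<mu>)) ?h = PiM ?I (\<lambda>_. \<mu>)"
    using \<rho> prob_space_axioms by (intro distr_PiM_reindex) (auto simp: inj_on_def inj_def)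
  then have "measure (PiM ?I (\<lambda>_. \<mu>)) (defset_mod \<mu> E r \<phi>) =
      measure (PiM ?J (\<lambda>_. \<mu>)) (?h -` defset_mod \<mu> E r \<phi> \<inter> space (PiM ?J (\<lambda>_. \<mu>)))"
    using measure_distr[OF h defset_measurable] by simp
  also have "?h -` defset_mod \<mu> E r \<phi> \<inter> space (PiM ?J (\<lambda>_. \<mu>)) = defset_mod \<mu> E r (rename \<rho> \<phi>)"
  proof -
    have "sat (space \<mu>) E r (?h \<omega>) \<phi> = sat (space \<mu>) E r (\<omega> \<circ> \<rho>) \<phi>" for \<omega>
      by (rule sat_cong) simp
    then show ?thesis
      using measurable_space[OF h] by (auto simp: defset_mod_def fv_rename[OF \<rho>] sat_rename[OF \<rho>])
  qed
  finally show ?thesis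
    by (simp add: stone_mod_eq_measure fv_rename[OF \<rho>])
qed

lemma stone_mod_Conj:
  assumes disj: "fv \<phi> \<inter> fv \<psi> = {}"
  shows "stone_mod \<mu> E r (Conj \<phi> \<psi>) = stone_mod \<mu> E r \<phi> * stone_mod \<mu> E r \<psi>"
proof -
  let ?I = "fv \<phi>" and ?J = "fv \<psi>"
  let ?P = "\<lambda>K. PiM K (\<lambda>_. \<mu>)"
  interpret product_prob_space "\<lambda>_::nat. \<mu>" UNIV
    by (intro product_prob_spaceI prob_space_axioms)
  interpret J: prob_space "?P ?J"
    by (rule prob_space_PiM_const)
  have "measure (?P (?I \<union> ?J)) (defset_mod \<mu> E r (Conj \<phi> \<psi>)) =
      measure (?P ?I \<Otimes>\<^sub>M ?P ?J) (merge ?I ?J -` defset_mod \<mu> E r (Conj \<phi> \<psi>) \<inter> space (?P ?I \<Otimes>\<^sub>M ?P ?J))"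
  proof -
    have "defset_mod \<mu> E r (Conj \<phi> \<psi>) \<in> sets (?P (?I \<union> ?J))"
      using defset_measurable[of r "Conj \<phi> \<psi>"] by simp
    from measure_distr[OF measurable_merge this] show ?thesis
      unfolding distr_merge[OF disj finite_fv finite_fv] .
  qed
  also have "merge ?I ?J -` defset_mod \<mu> E r (Conj \<phi> \<psi>) \<inter> space (?P ?I \<Otimes>\<^sub>M ?P ?J) =
      defset_mod \<mu> E r \<phi> \<times> defset_mod \<mu> E r \<psi>"
  proof -
    have "sat (space \<mu>) E r (merge ?I ?J (a, b)) \<phi> = sat (space \<mu>) E r a \<phi>"
      and "sat (space \<mu>) E r (merge ?I ?J (a, b)) \<psi> = sat (space \<mu>) E r b \<psi>" for a b
      using disj by (auto intro!: sat_cong)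
    then show ?thesis
      using measurable_space[OF measurable_merge, of _ ?I "\<lambda>_. \<mu>" ?J]
      by (auto simp: defset_mod_def space_pair_measure)
  qed
  also have "measure (?P ?I \<Otimes>\<^sub>M ?P ?J) (defset_mod \<mu> E r \<phi> \<times> defset_mod \<mu> E r \<psi>) =
      measure (?P ?I) (defset_mod \<mu> E r \<phi>) * measure (?P ?J) (defset_mod \<mu> E r \<psi>)"
    using J.emeasure_pair_measure_Times[OF defset_measurable defset_measurable]
    by (simp add: measure_def enn2real_mult)
  finally show ?thesis
    by (simp add: stone_mod_eq_measure)
qed

lemma stone_mod_conj_apart:
  "stone_mod \<mu> E r (conj_apart \<phi> \<psi>) = stone_mod \<mu> E r \<phi> * stone_mod \<mu> E r \<psi>"
proof -
  let ?\<rho> = "\<lambda>i. i + var_bound (fv \<phi>)"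
  have inj: "inj ?\<rho>"
    by (simp add: inj_def)
  have "fv \<phi> \<inter> fv (rename ?\<rho> \<psi>) = {}"
    using less_var_bound[OF finite_fv, of _ \<phi>] by (fastforce simp: fv_rename[OF inj])
  then show ?thesis
    by (simp add: conj_apart_def stone_mod_Conj stone_mod_rename[OF inj])
qed

lemma stone_mod_conjs_apart:
  "stone_mod \<mu> E r (conjs_apart \<phi>s) = prod_list (map (stone_mod \<mu> E r) \<phi>s)"
proof (induction \<phi>s)
  case Nil
  show ?case
    by (simp add: conjs_apart_def stone_mod_def)
next
  case (Cons \<phi> \<phi>s)
  then show ?case
    by (simp add: conjs_apart_def stone_mod_conj_apart)
qed

text \<open>Layer-cake counting: this turns a sum over the roots in \<xi> of rooted pairings into a sum of
  pairings of unrooted formulas, to which FO-convergence applies.\<close>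

lemma sum_stone_mod_roots:
  assumes \<xi>: "rootfree \<xi>" "fv \<xi> = {x}" and fin: "finite (defset1 (space \<mu>) E \<xi> x)"
    and N: "card (defset1 (space \<mu>) E \<xi> x) = N"
  shows "(\<Sum>r\<in>defset1 (space \<mu>) E \<xi> x. stone_mod \<mu> E r \<gamma>) =
    (\<Sum>t\<in>{1..N}. stone_mod \<mu> E undefined (at_least_roots t \<xi> x \<gamma>))"
proof -
  let ?S = "defset1 (space \<mu>) E \<xi> x" and ?P = "PiM (fv \<gamma>) (\<lambda>_. \<mu>)"
  interpret P: prob_space ?P
    by (rule prob_space_PiM_const)
  have "(\<Sum>r\<in>?S. stone_mod \<mu> E r \<gamma>) = (\<Sum>r\<in>?S. P.prob (defset_mod \<mu> E r \<gamma>))"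
    by (simp add: stone_mod_eq_measure)
  also have "\<dots> = (\<Sum>t\<in>{1..N}. P.prob {\<sigma> \<in> space ?P. t \<le> card {r \<in> ?S. \<sigma> \<in> defset_mod \<mu> E r \<gamma>}})"
    using fin N defset_measurable by (intro P.sum_measure_eq_sum_measure_levels) auto
  also have "\<dots> = (\<Sum>t\<in>{1..N}. stone_mod \<mu> E undefined (at_least_roots t \<xi> x \<gamma>))"
  proof (rule sum.cong[OF refl])
    fix t
    assume "t \<in> {1..N}"
    then have fv: "fv (at_least_roots t \<xi> x \<gamma>) = fv \<gamma>"
      using fv_at_least_roots[OF \<xi>(2)] by simp
    have "{r \<in> ?S. \<sigma> \<in> defset_mod \<mu> E r \<gamma>} = {r \<in> ?S. sat (space \<mu>) E r \<sigma> \<gamma>}" if "\<sigma> \<in> space ?P" for \<sigma>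
      using that by (auto simp: defset_mod_def)
    then have "{\<sigma> \<in> space ?P. t \<le> card {r \<in> ?S. \<sigma> \<in> defset_mod \<mu> E r \<gamma>}} =
        defset_mod \<mu> E undefined (at_least_roots t \<xi> x \<gamma>)"
      by (auto simp: defset_mod_def fv sat_at_least_roots[OF \<xi> fin])
    then show "P.prob {\<sigma> \<in> space ?P. t \<le> card {r \<in> ?S. \<sigma> \<in> defset_mod \<mu> E r \<gamma>}} =
        stone_mod \<mu> E undefined (at_least_roots t \<xi> x \<gamma>)"
      by (simp add: stone_mod_eq_measure fv)
  qed
  finally show ?thesis .
qed

end

section \<open>Convergence of the moments\<close>

lemma tendsto_sum_roots_prod_stone:
  fixes V :: "nat \<Rightarrow> 'v set" and E :: "nat \<Rightarrow> 'v \<Rightarrow> 'v \<Rightarrow> bool"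
    and \<nu> :: "('a::polish_space) measure" and EL :: "'a \<Rightarrow> 'a \<Rightarrow> bool"
  assumes graphs: "\<And>n. finite (V n) \<and> V n \<noteq> {}"
    and lim: "modeling_limit V E \<nu> EL"
    and \<xi>: "rootfree \<xi>" "fv \<xi> = {x}" and fin: "finite (defset1 (space \<nu>) EL \<xi> x)"
    and card: "\<And>n. card (defset1 (V n) (E n) \<xi> x) = card (defset1 (space \<nu>) EL \<xi> x)"
  shows "(\<lambda>n. \<Sum>s\<in>defset1 (V n) (E n) \<xi> x. prod_list (map (stone_fin (V n) (E n) s) \<phi>s))
     \<longlonglongrightarrow> (\<Sum>r\<in>defset1 (space \<nu>) EL \<xi> x. prod_list (map (stone_mod \<nu> EL r) \<phi>s))"
proof -
  let ?N = "card (defset1 (space \<nu>) EL \<xi> x)"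
  let ?\<Theta> = "\<lambda>t. at_least_roots t \<xi> x (conjs_apart \<phi>s)"
  interpret L: measured_graph \<nu> EL
    using lim by (intro measured_graph_modeling) (simp add: modeling_limit_def)
  have finite_graph: "(\<Sum>s\<in>defset1 (V n) (E n) \<xi> x. prod_list (map (stone_fin (V n) (E n) s) \<phi>s)) =
      (\<Sum>t\<in>{1..?N}. stone_fin (V n) (E n) undefined (?\<Theta> t))" for n
  proof -
    let ?U = "uniform_count_measure (V n)"
    have V: "finite (V n)" "V n \<noteq> {}"
      using graphs by auto
    interpret G: measured_graph ?U "E n"
      using V by (rule measured_graph_uniform_count_measure)
    have space: "space ?U = V n"
      by (rule space_uniform_count_measure)
    have stone: "stone_fin (V n) (E n) = stone_mod ?U (E n)"
      using stone_fin_eq_stone_mod[OF V] by blast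
    have "finite (defset1 (V n) (E n) \<xi> x)"
      using V by (simp add: defset1_def)
    then show ?thesis
      using G.sum_stone_mod_roots[OF \<xi>, of ?N "conjs_apart \<phi>s", unfolded space] card
      by (simp add: stone G.stone_mod_conjs_apart)
  qed
  have "(\<lambda>n. \<Sum>t\<in>{1..?N}. stone_fin (V n) (E n) undefined (?\<Theta> t)) \<longlonglongrightarrow>
      (\<Sum>t\<in>{1..?N}. stone_mod \<nu> EL undefined (?\<Theta> t))"
    using lim rootfree_at_least_roots[OF \<xi>(1)] unfolding modeling_limit_def by (intro tendsto_sum) blast
  also have "(\<Sum>t\<in>{1..?N}. stone_mod \<nu> EL undefined (?\<Theta> t)) =
      (\<Sum>r\<in>defset1 (space \<nu>) EL \<xi> x. stone_mod \<nu> EL r (conjs_apart \<phi>s))"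
    by (rule L.sum_stone_mod_roots[OF \<xi> fin refl, symmetric])
  also have "\<dots> = (\<Sum>r\<in>defset1 (space \<nu>) EL \<xi> x. prod_list (map (stone_mod \<nu> EL r) \<phi>s))"
    by (simp add: L.stone_mod_conjs_apart)
  finally show ?thesis
    unfolding finite_graph .
qed

section \<open>Selecting a convergent sequence of roots\<close>

inductive polynomial_fun :: "(('i \<Rightarrow> real) \<Rightarrow> real) \<Rightarrow> bool" where
  monomial: "polynomial_fun (\<lambda>z. c * prod_list (map z l))"
| add: "polynomial_fun f \<Longrightarrow> polynomial_fun g \<Longrightarrow> polynomial_fun (\<lambda>z. f z + g z)"

lemma polynomial_fun_const: "polynomial_fun (\<lambda>z. c)"
  using polynomial_fun.monomial[of c "[]"] by simp

lemma polynomial_fun_coord: "polynomial_fun (\<lambda>z. z i)"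
  using polynomial_fun.monomial[of 1 "[i]"] by simp

lemma polynomial_fun_mult_monomial:
  "polynomial_fun g \<Longrightarrow> polynomial_fun (\<lambda>z. c * prod_list (map z l) * g z)"
proof (induction rule: polynomial_fun.induct)
  case (monomial c' l')
  have "(\<lambda>z. c * prod_list (map z l) * (c' * prod_list (map z l'))) = (\<lambda>z. (c * c') * prod_list (map z (l @ l')))"
    by (auto simp: fun_eq_iff)
  then show ?case
    by (metis polynomial_fun.monomial)
next
  case (add f g)
  then show ?case
    using polynomial_fun.add[OF add.IH] by (simp add: distrib_left)
qed

lemma polynomial_fun_mult: "polynomial_fun f \<Longrightarrow> polynomial_fun g \<Longrightarrow> polynomial_fun (\<lambda>z. f z * g z)"
proof (induction rule: polynomial_fun.induct)
  case (monomial c l)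
  then show ?case by (rule polynomial_fun_mult_monomial)
next
  case (add f1 f2)
  then show ?case
    using polynomial_fun.add[OF add.IH] by (simp add: distrib_right)
qed

lemma polynomial_fun_diff: "polynomial_fun f \<Longrightarrow> polynomial_fun g \<Longrightarrow> polynomial_fun (\<lambda>z. f z - g z)"
  using polynomial_fun.add[of f "\<lambda>z. -1 * g z"] polynomial_fun_mult[OF polynomial_fun_const, of g "-1"]
  by simp

lemma polynomial_fun_sum:
  "finite A \<Longrightarrow> (\<And>a. a \<in> A \<Longrightarrow> polynomial_fun (f a)) \<Longrightarrow> polynomial_fun (\<lambda>z. \<Sum>a\<in>A. f a z)"
  by (induction A rule: finite_induct) (auto intro: polynomial_fun_const polynomial_fun.add)

lemma polynomial_fun_prod:
  "finite A \<Longrightarrow> (\<And>a. a \<in> A \<Longrightarrow> polynomial_fun (f a)) \<Longrightarrow> polynomial_fun (\<lambda>z. \<Prod>a\<in>A. f a z)"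
  by (induction A rule: finite_induct) (auto intro: polynomial_fun_const polynomial_fun_mult)

lemma tendsto_sum_polynomial_fun:
  assumes "polynomial_fun f"
    and moments: "\<And>l. (\<lambda>n. \<Sum>s\<in>S n. prod_list (map (z n s) l)) \<longlonglongrightarrow> (\<Sum>r\<in>T. prod_list (map (w r) l))"
  shows "(\<lambda>n. \<Sum>s\<in>S n. f (z n s)) \<longlonglongrightarrow> (\<Sum>r\<in>T. f (w r))"
  using assms(1)
proof (induction rule: polynomial_fun.induct)
  case (monomial c l)
  then show ?case
    using tendsto_mult_left[OF moments[of l], of c] by (simp add: sum_distrib_left)
next
  case (add f g)
  then show ?case
    using tendsto_add[OF add.IH] by (simp add: sum.distrib)
qed

definition sqdist_on :: "'i set \<Rightarrow> ('i \<Rightarrow> real) \<Rightarrow> ('i \<Rightarrow> real) \<Rightarrow> real" where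
  "sqdist_on I v z = (\<Sum>i\<in>I. (z i - v i)\<^sup>2)"

lemma polynomial_fun_sqdist_on: "finite I \<Longrightarrow> polynomial_fun (sqdist_on I v)"
  unfolding sqdist_on_def power2_eq_square
  by (intro polynomial_fun_sum polynomial_fun_mult polynomial_fun_diff polynomial_fun_coord polynomial_fun_const)

lemma sqdist_on_nonneg: "0 \<le> sqdist_on I v z"
  by (simp add: sqdist_on_def sum_nonneg)

lemma sqdist_on_commute: "sqdist_on I v z = sqdist_on I z v"
  by (simp add: sqdist_on_def power2_commute)

lemma square_le_sqdist_on: "finite I \<Longrightarrow> i \<in> I \<Longrightarrow> (z i - v i)\<^sup>2 \<le> sqdist_on I v z"
  unfolding sqdist_on_def by (rule member_le_sum) auto

lemma separating_polynomial_fun: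
  fixes w :: "'a \<Rightarrow> 'i \<Rightarrow> real"
  assumes "finite T" "r0 \<in> T" "finite I"
  obtains P where "polynomial_fun P" "\<And>z. 0 \<le> P z" "0 < P (w r0)"
    "\<And>r. r \<in> T \<Longrightarrow> sqdist_on I (w r0) (w r) * P (w r) = 0"
proof
  define T' where "T' = {r \<in> T. sqdist_on I (w r) (w r0) \<noteq> 0}"
  show "polynomial_fun (\<lambda>z. \<Prod>r\<in>T'. sqdist_on I (w r) z)"
    using assms by (intro polynomial_fun_prod polynomial_fun_sqdist_on) (auto simp: T'_def)
  show "0 \<le> (\<Prod>r\<in>T'. sqdist_on I (w r) z)" for z
    by (simp add: prod_nonneg sqdist_on_nonneg)
  show "0 < (\<Prod>r\<in>T'. sqdist_on I (w r) (w r0))"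
    using sqdist_on_nonneg by (intro prod_pos) (auto simp: T'_def order_le_less)
  show "sqdist_on I (w r0) (w r) * (\<Prod>r'\<in>T'. sqdist_on I (w r') (w r)) = 0" if "r \<in> T" for r
  proof (cases "r \<in> T'")
    case True
    then have "(\<Prod>r'\<in>T'. sqdist_on I (w r') (w r)) = 0"
      using assms(1) by (intro prod_zero) (auto simp: T'_def sqdist_on_def)
    then show ?thesis by simp
  next
    case False
    then show ?thesis
      using that by (simp add: T'_def sqdist_on_commute)
  qed
qed

lemma tendsto_of_sqdist_on_tendsto_0:
  assumes "finite I" "i \<in> I" "(\<lambda>n. sqdist_on I v (f n)) \<longlonglongrightarrow> 0"
  shows "(\<lambda>n. f n i) \<longlonglongrightarrow> v i"
proof -
  have "(\<lambda>n. (f n i - v i)\<^sup>2) \<longlonglongrightarrow> 0"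
    using assms by (intro tendsto_sandwich[OF _ _ tendsto_const assms(3)])
      (auto intro!: always_eventually square_le_sqdist_on)
  then have "(\<lambda>n. sqrt ((f n i - v i)\<^sup>2)) \<longlonglongrightarrow> sqrt 0"
    by (rule tendsto_real_sqrt)
  then have "(\<lambda>n. f n i - v i) \<longlonglongrightarrow> 0"
    by (simp add: tendsto_rabs_zero_iff)
  then show ?thesis
    by (simp add: LIM_zero_iff)
qed

lemma le_at_argmax_weight:
  fixes P d :: "'v \<Rightarrow> real"
  assumes "finite S" "s \<in> S" "\<And>s'. s' \<in> S \<Longrightarrow> P s' \<le> P s"
    and nonneg: "\<And>s'. s' \<in> S \<Longrightarrow> 0 \<le> P s'" "\<And>s'. s' \<in> S \<Longrightarrow> 0 \<le> d s'"
    and pos: "0 < (\<Sum>s'\<in>S. P s')"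
  shows "d s \<le> card S * (\<Sum>s'\<in>S. d s' * P s') / (\<Sum>s'\<in>S. P s')"
proof -
  have total: "(\<Sum>s'\<in>S. P s') \<le> card S * P s"
    using sum_mono[of S P "\<lambda>_. P s"] assms(3) by simp
  with pos have "0 < P s"
    by (smt (verit) mult_nonneg_nonpos of_nat_0_le_iff)
  have "d s * P s \<le> (\<Sum>s'\<in>S. d s' * P s')"
    using assms(1,2) nonneg by (intro member_le_sum) auto
  then have "d s * (\<Sum>s'\<in>S. P s') \<le> card S * (\<Sum>s'\<in>S. d s' * P s')"
    using total nonneg(2)[OF assms(2)] \<open>0 < P s\<close>
    by (smt (verit) mult_left_mono mult.commute mult.left_commute of_nat_0_le_iff mult_right_mono)
  then show ?thesis
    using pos by (simp add: pos_le_divide_eq)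
qed

lemma tendsto_0_at_argmax_weight:
  fixes P d :: "nat \<Rightarrow> 'v \<Rightarrow> real"
  assumes finS: "\<And>n. finite (S n)" and card: "\<And>n. card (S n) = N"
    and rs: "\<And>n. rs n \<in> S n" "\<And>n s. s \<in> S n \<Longrightarrow> P n s \<le> P n (rs n)"
    and nonneg: "\<And>n s. 0 \<le> P n s" "\<And>n s. 0 \<le> d n s"
    and lim_P: "(\<lambda>n. \<Sum>s\<in>S n. P n s) \<longlonglongrightarrow> c" and pos: "0 < c"
    and lim_dP: "(\<lambda>n. \<Sum>s\<in>S n. d n s * P n s) \<longlonglongrightarrow> 0"
  shows "(\<lambda>n. d n (rs n)) \<longlonglongrightarrow> 0"
proof -
  let ?b = "\<lambda>n. N * (\<Sum>s\<in>S n. d n s * P n s) / (\<Sum>s\<in>S n. P n s)"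
  have lim_b: "?b \<longlonglongrightarrow> 0"
    using tendsto_divide[OF tendsto_mult_left[OF lim_dP, of "real N"] lim_P] pos by simp
  have "eventually (\<lambda>n. 0 < (\<Sum>s\<in>S n. P n s)) sequentially"
    using order_tendstoD(1)[OF lim_P pos] .
  then have le_b: "eventually (\<lambda>n. d n (rs n) \<le> ?b n) sequentially"
  proof (rule eventually_mono)
    fix n
    assume "0 < (\<Sum>s\<in>S n. P n s)"
    then have "d n (rs n) \<le> card (S n) * (\<Sum>s\<in>S n. d n s * P n s) / (\<Sum>s\<in>S n. P n s)"
      by (intro le_at_argmax_weight[OF finS rs(1)]) (auto simp: rs(2) nonneg)
    then show "d n (rs n) \<le> ?b n"
      by (simp add: card)
  qed
  have "eventually (\<lambda>n. 0 \<le> d n (rs n)) sequentially"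
    by (simp add: nonneg)
  from tendsto_sandwich[OF this le_b tendsto_const lim_b] show ?thesis .
qed

lemma finite_ex_argmax:
  fixes f :: "'a \<Rightarrow> 'b::linorder"
  assumes "finite S" "S \<noteq> {}"
  shows "\<exists>s\<in>S. \<forall>s'\<in>S. f s' \<le> f s"
proof -
  have "Max (f ` S) \<in> f ` S"
    using assms by (intro Max_in) auto
  then obtain s where "s \<in> S" "f s = Max (f ` S)"
    by auto
  moreover have "f s' \<le> Max (f ` S)" if "s' \<in> S" for s'
    using assms that by (intro Max_ge) auto
  ultimately show ?thesis
    by (intro bexI[of _ s]) auto
qed

lemma exists_convergent_selection:
  fixes z :: "nat \<Rightarrow> 'v \<Rightarrow> 'i \<Rightarrow> real" and w :: "'a \<Rightarrow> 'i \<Rightarrow> real"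
  assumes finS: "\<And>n. finite (S n)" and card: "\<And>n. card (S n) = card T"
    and T: "finite T" "T \<noteq> {}" and I: "finite I"
    and moments: "\<And>l. (\<lambda>n. \<Sum>s\<in>S n. prod_list (map (z n s) l)) \<longlonglongrightarrow> (\<Sum>r\<in>T. prod_list (map (w r) l))"
  shows "\<exists>rs r. (\<forall>n. rs n \<in> S n) \<and> r \<in> T \<and> (\<forall>i\<in>I. (\<lambda>n. z n (rs n) i) \<longlonglongrightarrow> w r i)"
proof -
  obtain r0 where r0: "r0 \<in> T"
    using T by blast
  obtain P where P: "polynomial_fun P" "\<And>v. 0 \<le> P v" "0 < P (w r0)"
    and vanish: "\<And>r. r \<in> T \<Longrightarrow> sqdist_on I (w r0) (w r) * P (w r) = 0"
    using separating_polynomial_fun[OF T(1) r0 I] by blast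
  let ?d = "sqdist_on I (w r0)"
  have lim_P: "(\<lambda>n. \<Sum>s\<in>S n. P (z n s)) \<longlonglongrightarrow> (\<Sum>r\<in>T. P (w r))"
    by (rule tendsto_sum_polynomial_fun[OF P(1) moments])
  have pos: "0 < (\<Sum>r\<in>T. P (w r))"
    using P(3) T(1) r0 P(2) by (smt (verit) member_le_sum)
  have "(\<lambda>n. \<Sum>s\<in>S n. ?d (z n s) * P (z n s)) \<longlonglongrightarrow> (\<Sum>r\<in>T. ?d (w r) * P (w r))"
    by (rule tendsto_sum_polynomial_fun[OF polynomial_fun_mult[OF polynomial_fun_sqdist_on[OF I] P(1)] moments])
  moreover have "(\<Sum>r\<in>T. ?d (w r) * P (w r)) = 0"
    by (rule sum.neutral) (simp add: vanish)
  ultimately have lim_dP: "(\<lambda>n. \<Sum>s\<in>S n. ?d (z n s) * P (z n s)) \<longlonglongrightarrow> 0"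
    by simp
  have "\<exists>s\<in>S n. \<forall>s'\<in>S n. P (z n s') \<le> P (z n s)" for n
    using card[of n] T by (intro finite_ex_argmax finS) auto
  then obtain rs where rs: "\<And>n. rs n \<in> S n" "\<And>n s. s \<in> S n \<Longrightarrow> P (z n s) \<le> P (z n (rs n))"
    by metis
  have "(\<lambda>n. ?d (z n (rs n))) \<longlonglongrightarrow> 0"
    by (rule tendsto_0_at_argmax_weight[where P = "\<lambda>n s. P (z n s)" and d = "\<lambda>n s. ?d (z n s)",
          OF finS card rs _ _ lim_P pos lim_dP])
      (simp_all add: P(2) sqdist_on_nonneg)
  then have "(\<lambda>n. z n (rs n) i) \<longlonglongrightarrow> w r0 i" if "i \<in> I" for i
    by (rule tendsto_of_sqdist_on_tendsto_0[OF I that])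
  with rs(1) r0 show ?thesis
    by blast
qed

theorem lemma4:
  fixes V :: "nat \<Rightarrow> 'v set" and E :: "nat \<Rightarrow> 'v \<Rightarrow> 'v \<Rightarrow> bool"
    and \<nu> :: "('a::polish_space) measure" and EL :: "'a \<Rightarrow> 'a \<Rightarrow> bool"
    and \<xi> :: fm and x :: nat and \<phi>s :: "fm list"
  assumes graphs: "\<And>n. finite (V n) \<and> V n \<noteq> {}"
    and conv: "FO_convergent V E"
    and lim: "modeling_limit V E \<nu> EL"
    and xi_lang: "rootfree \<xi>" and xi_fv: "fv \<xi> = {x}"
    and xi_fin: "finite (defset1 (space \<nu>) EL \<xi> x)"
    and xi_ne: "defset1 (space \<nu>) EL \<xi> x \<noteq> {}"
    and xi_min: "\<And>\<zeta> y. rootfree \<zeta> \<Longrightarrow> fv \<zeta> = {y} \<Longrightarrow>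
                   \<not> (defset1 (space \<nu>) EL \<zeta> y \<noteq> {} \<and>
                      defset1 (space \<nu>) EL \<zeta> y \<subset> defset1 (space \<nu>) EL \<xi> x)"
    and xi_card: "\<And>n. card (defset1 (V n) (E n) \<xi> x) = card (defset1 (space \<nu>) EL \<xi> x)"
  shows "\<exists>rs r. (\<forall>n. rs n \<in> defset1 (V n) (E n) \<xi> x) \<and> r \<in> defset1 (space \<nu>) EL \<xi> x \<and>
           (\<forall>\<phi>\<in>set \<phi>s. (\<lambda>n. stone_fin (V n) (E n) (rs n) \<phi>) \<longlonglongrightarrow> stone_mod \<nu> EL r \<phi>)"
proof -
  have "finite (defset1 (V n) (E n) \<xi> x)" for n
    using graphs[of n] by (simp add: defset1_def)
  from exists_convergent_selection[OF this xi_card xi_fin xi_ne finite_set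
      tendsto_sum_roots_prod_stone[OF graphs lim xi_lang xi_fv xi_fin xi_card]]
  show ?thesis .
qed

end
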